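(* Let $Q^n$ and $Q^{n-1}$ be matrix-valued grid functions satisfying the boundary conditions whose values are symmetric and trace-free, and let $r^n$ be a real grid function. Suppose that $Q^{n+1}$ (a grid function of real $3\times3$ matrices satisfying the boundary conditions) and $r^{n+1}$ (a real grid function) satisfy, for all $(i,j,k)\in\{1,\dots,N\}^3$, $\frac{Q^{n+1}_{ijk}-Q^n_{ijk}}{\Delta t}=M\Big(L_1\Delta_hQ^{n+\frac12}_{ijk}-r^{n+\frac12}_{ijk}\overline P^{n+\frac12}_{ijk}+\frac{L_2+L_3}{2}\cdot\frac{\alpha_h(Q^{n+1})_{ijk}+\alpha_h(Q^n)_{ijk}}{2}\Big)$ and $r^{n+1}_{ijk}-r^n_{ijk}=\overline P^{n+\frac12}_{ijk}:(Q^{n+1}_{ijk}-Q^n_{ijk})$, where $f^{n+\frac12}=\frac12(f^{n+1}+f^n)$ and $\overline P^{n+\frac12}_{ijk}=\frac32P(Q^n_{ijk})-\frac12P(Q^{n-1}_{ijk})$. Then $Q^{n+1}_{ijk}$ is symmetric and trace-free for all $(i,j,k)$.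
   Context: Parameters: $a,b\in\mathbb{R}$, $c,L_1,L_2,L_3,M>0$, $\Delta t>0$, and $A_0>0$ such that $\inf\{\frac a2\operatorname{tr}(Q^2)-\frac b3\operatorname{tr}(Q^3)+\frac c4(\operatorname{tr}(Q^2))^2+A_0:\ Q\in\mathbb{R}^{3\times3}\text{ symmetric}\}>0$. For symmetric $Q$ let $r(Q)=\sqrt{2(\frac a2\operatorname{tr}(Q^2)-\frac b3\operatorname{tr}(Q^3)+\frac c4(\operatorname{tr}(Q^2))^2+A_0)}$, $S(Q)=aQ-b(Q^2-\frac13\operatorname{tr}(Q^2)I)+c\operatorname{tr}(Q^2)Q$, $P(Q)=S(Q)/r(Q)$; $A:B=\sum_{i,j}A_{ij}B_{ij}$. Grid: $N\in\mathbb{N}$, $h=1/(N+1)$. Grid functions are families $(f_{ijk})_{(i,j,k)\in\mathbb{Z}^3}$ of scalars or real $3\times3$ matrices; the boundary conditions mean $f_{ijk}=0$ whenever $(i,j,k)\notin\{1,\dots,N\}^3$. $D^\pm_1f_{ijk}=\pm(f_{i\pm1,j,k}-f_{ijk})/h$, $D^c_1f_{ijk}=(f_{i+1,j,k}-f_{i-1,j,k})/(2h)$, and analogously $D^\pm_2,D^c_2$ (shift in $j$), $D^\pm_3,D^c_3$ (shift in $k$). $\Delta_hf=\sum_{\alpha=1}^3D^-_\alpha D^+_\alpha f$, $\alpha_h(Q)_{ws}=\sum_{\beta=1}^3[D^c_wD^c_\beta Q_{s\beta}+D^c_sD^c_\beta Q_{w\beta}]-\frac23\sum_{\beta,\gamma=1}^3D^c_\beta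 D^c_\gamma Q_{\beta\gamma}\delta_{ws}$. *)

theory Defs
  imports "HOL-Analysis.Analysis"
begin

type_synonym mat3 = "real^3^3"
type_synonym gridpt = "int \<times> int \<times> int"

definition bulk :: "real \<Rightarrow> real \<Rightarrow> real \<Rightarrow> real \<Rightarrow> mat3 \<Rightarrow> real" where
  "bulk a b c A0 Q = a/2 * trace (Q ** Q) - b/3 * trace (Q ** Q ** Q)
     + c/4 * (trace (Q ** Q))^2 + A0"

definition rfun :: "real \<Rightarrow> real \<Rightarrow> real \<Rightarrow> real \<Rightarrow> mat3 \<Rightarrow> real" where
  "rfun a b c A0 Q = sqrt (2 * bulk a b c A0 Q)"

definition Sfun :: "real \<Rightarrow> real \<Rightarrow> real \<Rightarrow> mat3 \<Rightarrow> mat3" where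
  "Sfun a b c Q = a *\<^sub>R Q - b *\<^sub>R (Q ** Q - (trace (Q ** Q) / 3) *\<^sub>R mat 1)
     + (c * trace (Q ** Q)) *\<^sub>R Q"

definition Pfun :: "real \<Rightarrow> real \<Rightarrow> real \<Rightarrow> real \<Rightarrow> mat3 \<Rightarrow> mat3" where
  "Pfun a b c A0 Q = (1 / rfun a b c A0 Q) *\<^sub>R Sfun a b c Q"

definition frob :: "mat3 \<Rightarrow> mat3 \<Rightarrow> real" where
  "frob A B = (\<Sum>i\<in>UNIV. \<Sum>j\<in>UNIV. A $ i $ j * B $ i $ j)"

definition symmetric_mat :: "mat3 \<Rightarrow> bool" where
  "symmetric_mat Q \<longleftrightarrow> transpose Q = Q"

definition grid_interior :: "nat \<Rightarrow> gridpt \<Rightarrow> bool" where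
  "grid_interior N p \<longleftrightarrow> (case p of (i, j, k) \<Rightarrow>
     1 \<le> i \<and> i \<le> int N \<and> 1 \<le> j \<and> j \<le> int N \<and> 1 \<le> k \<and> k \<le> int N)"

definition bc :: "nat \<Rightarrow> (gridpt \<Rightarrow> 'a::zero) \<Rightarrow> bool" where
  "bc N f \<longleftrightarrow> (\<forall>p. \<not> grid_interior N p \<longrightarrow> f p = 0)"

definition shift :: "3 \<Rightarrow> int \<Rightarrow> gridpt \<Rightarrow> gridpt" where
  "shift d s p = (case p of (i, j, k) \<Rightarrow>
     if d = 1 then (i + s, j, k) else if d = 2 then (i, j + s, k) else (i, j, k + s))"

definition Dp :: "real \<Rightarrow> 3 \<Rightarrow> (gridpt \<Rightarrow> 'a::real_vector) \<Rightarrow> gridpt \<Rightarrow> 'a" where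
  "Dp h d f p = (1 / h) *\<^sub>R (f (shift d 1 p) - f p)"

definition Dm :: "real \<Rightarrow> 3 \<Rightarrow> (gridpt \<Rightarrow> 'a::real_vector) \<Rightarrow> gridpt \<Rightarrow> 'a" where
  "Dm h d f p = (1 / h) *\<^sub>R (f p - f (shift d (-1) p))"

definition Dc :: "real \<Rightarrow> 3 \<Rightarrow> (gridpt \<Rightarrow> 'a::real_vector) \<Rightarrow> gridpt \<Rightarrow> 'a" where
  "Dc h d f p = (1 / (2 * h)) *\<^sub>R (f (shift d 1 p) - f (shift d (-1) p))"

definition lap_h :: "real \<Rightarrow> (gridpt \<Rightarrow> 'a::real_vector) \<Rightarrow> gridpt \<Rightarrow> 'a" where
  "lap_h h f p = (\<Sum>d\<in>UNIV. Dm h d (Dp h d f) p)"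

definition alpha_h :: "real \<Rightarrow> (gridpt \<Rightarrow> mat3) \<Rightarrow> gridpt \<Rightarrow> mat3" where
  "alpha_h h Q p = (\<chi> w s.
      (\<Sum>\<beta>\<in>UNIV. Dc h w (Dc h \<beta> (\<lambda>q. Q q $ s $ \<beta>)) p
                 + Dc h s (Dc h \<beta> (\<lambda>q. Q q $ w $ \<beta>)) p)
      - 2/3 * (\<Sum>\<beta>\<in>UNIV. \<Sum>\<gamma>\<in>UNIV. Dc h \<beta> (Dc h \<gamma> (\<lambda>q. Q q $ \<beta> $ \<gamma>)) p)
            * (if w = s then 1 else 0))"

definition hstep :: "nat \<Rightarrow> real" where
  "hstep N = 1 / (real N + 1)"

end

theory Submission
  imports Defs
begin

text \<open>Both the symmetry defects \<open>Q $ i $ j - Q $ j $ i\<close> and the trace are linear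
functionals that annihilate \<open>P(Q)\<close> for symmetric trace-free \<open>Q\<close> and annihilate every
\<open>\<alpha>\<^sub>h(Q)\<close>. Applying such a functional \<open>l\<close> to the scheme kills the \<open>r \<cdot> P\<close> and \<open>\<alpha>\<^sub>h\<close>
terms and, since \<open>l(Q\<^sup>n) = 0\<close>, leaves \<open>u = \<Delta>t M L\<^sub>1/2 \<cdot> \<Delta>\<^sub>h u\<close> for the grid function
\<open>u = l(Q\<^sup>n\<^sup>+\<^sup>1)\<close>, which vanishes outside the grid. By the discrete maximum principle
\<open>u = 0\<close>.\<close>

lemma linear_lap_h:
  assumes "linear l"
  shows "l (lap_h h f p) = lap_h h (\<lambda>q. l (f q)) p"
  unfolding lap_h_def Dm_def Dp_def
  by (simp add: linear_sum[OF assms] linear_scale[OF assms] linear_diff[OF assms])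

lemma shift_plus_minus [simp]: "shift d 1 (shift d (-1) p) = p"
  by (cases p) (auto simp: shift_def)

lemma finite_grid_interior: "finite {p. grid_interior N p}"
proof (rule finite_subset)
  show "{p. grid_interior N p} \<subseteq> {1..int N} \<times> {1..int N} \<times> {1..int N}"
    by (auto simp: grid_interior_def)
qed simp

lemma bc_outside: "bc N f \<Longrightarrow> \<not> grid_interior N p \<Longrightarrow> f p = 0"
  unfolding bc_def by blast

lemma lap_h_nonpos_at_max:
  fixes u :: "gridpt \<Rightarrow> real"
  assumes "\<And>q. u q \<le> u m"
  shows "lap_h h u m \<le> 0"
  unfolding lap_h_def
proof (rule sum_nonpos)
  fix d
  have "Dm h d (Dp h d u) m = ((u (shift d 1 m) - u m) - (u m - u (shift d (-1) m))) / (h * h)"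
    unfolding Dm_def Dp_def by (cases "h = 0") (simp_all add: field_simps)
  also have "\<dots> \<le> 0"
    using assms[of "shift d 1 m"] assms[of "shift d (-1) m"]
    by (intro divide_nonpos_nonneg) simp_all
  finally show "Dm h d (Dp h d u) m \<le> 0" .
qed

lemma discrete_max_principle:
  fixes u :: "gridpt \<Rightarrow> real"
  assumes bc: "bc N u" and "\<kappa> \<ge> 0"
    and sub: "\<And>p. grid_interior N p \<Longrightarrow> u p \<le> \<kappa> * lap_h h u p"
  shows "u p0 \<le> 0"
proof (rule ccontr)
  assume "\<not> u p0 \<le> 0"
  let ?S = "{p. grid_interior N p}"
  have "p0 \<in> ?S"
    using \<open>\<not> u p0 \<le> 0\<close> bc_outside[OF bc] by fastforce
  then obtain m where m: "m \<in> ?S" "u m = Max (u ` ?S)"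
    using Max_in[of "u ` ?S"] finite_grid_interior by fastforce
  have max_interior: "u q \<le> u m" if "q \<in> ?S" for q
    using Max_ge[of "u ` ?S"] finite_grid_interior that m(2) by simp
  with \<open>p0 \<in> ?S\<close> \<open>\<not> u p0 \<le> 0\<close> have "u m > 0"
    by fastforce
  have "u q \<le> u m" for q
    using max_interior[of q] bc_outside[OF bc, of q] \<open>u m > 0\<close> by fastforce
  then have "\<kappa> * lap_h h u m \<le> 0"
    using \<open>\<kappa> \<ge> 0\<close> lap_h_nonpos_at_max by (simp add: mult_nonneg_nonpos)
  with sub[of m] m(1) \<open>u m > 0\<close> show False
    by simp
qed

lemma discrete_helmholtz_zero:
  fixes u :: "gridpt \<Rightarrow> real"
  assumes bc: "bc N u" and \<kappa>: "\<kappa> \<ge> 0"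
    and eq: "\<And>p. grid_interior N p \<Longrightarrow> u p = \<kappa> * lap_h h u p"
  shows "u p0 = 0"
proof -
  have "u p0 \<le> 0"
    using discrete_max_principle[OF bc \<kappa>, where h = h] eq by simp
  moreover have "- u p0 \<le> 0"
  proof (rule discrete_max_principle[OF _ \<kappa>])
    show "bc N (\<lambda>q. - u q)"
      using bc by (simp add: bc_def)
    show "- u p \<le> \<kappa> * lap_h h (\<lambda>q. - u q) p" if "grid_interior N p" for p
      using eq[OF that] linear_lap_h[OF linear_uminus, of h u p, symmetric] by simp
  qed
  ultimately show ?thesis
    by simp
qed

lemma linear_constraint_preserved:
  fixes l :: "mat3 \<Rightarrow> real" and Qn Qnp1 F :: "gridpt \<Rightarrow> mat3"
  assumes l: "linear l"
    and Qn: "\<And>q. l (Qn q) = 0"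
    and F: "\<And>q. grid_interior N q \<Longrightarrow> l (F q) = 0"
    and bc: "bc N Qnp1" and "M > 0" "L1 > 0" "dt > 0"
    and step: "\<And>p. grid_interior N p \<Longrightarrow> (1/dt) *\<^sub>R (Qnp1 p - Qn p) =
      M *\<^sub>R (L1 *\<^sub>R lap_h h (\<lambda>q. (1/2) *\<^sub>R (Qnp1 q + Qn q)) p + F p)"
  shows "l (Qnp1 p0) = 0"
proof -
  let ?u = "\<lambda>q. l (Qnp1 q)"
  note l_simps = linear_scale[OF l] linear_diff[OF l] linear_add[OF l] linear_0[OF l] Qn
  show ?thesis
  proof (rule discrete_helmholtz_zero[where \<kappa> = "dt * M * L1 / 2"])
    show "bc N ?u"
      using bc by (simp add: bc_def l_simps)
    show "0 \<le> dt * M * L1 / 2"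
      using \<open>M > 0\<close> \<open>L1 > 0\<close> \<open>dt > 0\<close> by simp
    fix p assume p: "grid_interior N p"
    have "?u p / dt = l ((1/dt) *\<^sub>R (Qnp1 p - Qn p))"
      by (simp add: l_simps)
    also have "\<dots> = M * L1 * l (lap_h h (\<lambda>q. (1/2) *\<^sub>R (Qnp1 q + Qn q)) p)"
      by (simp add: step[OF p] l_simps F[OF p])
    also have "l (lap_h h (\<lambda>q. (1/2) *\<^sub>R (Qnp1 q + Qn q)) p) = lap_h h (\<lambda>q. (1/2) * ?u q) p"
      by (simp add: linear_lap_h[OF l] l_simps)
    also have "\<dots> = (1/2) * lap_h h ?u p"
      using linear_lap_h[OF linear_times, of "1/2" h ?u p] by simp
    finally show "?u p = dt * M * L1 / 2 * lap_h h ?u p"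
      using \<open>dt > 0\<close> by (simp add: field_simps)
  qed
qed

lemma symmetric_mat_iff: "symmetric_mat X \<longleftrightarrow> (\<forall>i j. X $ i $ j = X $ j $ i)"
  unfolding symmetric_mat_def transpose_def vec_eq_iff by auto

lemma linear_symmetry_defect: "linear (\<lambda>X::mat3. X $ i $ j - X $ j $ i)"
  by (rule linearI) (simp_all add: algebra_simps)

lemma linear_trace: "linear (trace :: mat3 \<Rightarrow> real)"
  by (rule linearI) (simp_all add: trace_def sum.distrib sum_distrib_left)

lemma symmetric_mat_Sfun:
  assumes "symmetric_mat Q"
  shows "symmetric_mat (Sfun a b c Q)"
proof -
  have "symmetric_mat (Q ** Q)"
    using assms unfolding symmetric_mat_def by (simp add: matrix_transpose_mul)
  with assms show ?thesis
    unfolding Sfun_def symmetric_mat_iff by (simp add: mat_def)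
qed

lemma symmetric_mat_Pfun: "symmetric_mat Q \<Longrightarrow> symmetric_mat (Pfun a b c A0 Q)"
  using symmetric_mat_Sfun unfolding Pfun_def symmetric_mat_iff by simp

lemma trace_Pfun:
  assumes "trace Q = 0"
  shows "trace (Pfun a b c A0 Q) = 0"
proof -
  have "trace (Sfun a b c Q) = 0"
    using assms unfolding Sfun_def
    by (simp add: trace_add trace_sub linear_scale[OF linear_trace] trace_I)
  then show ?thesis
    unfolding Pfun_def by (simp add: linear_scale[OF linear_trace])
qed

lemma symmetric_mat_alpha_h: "symmetric_mat (alpha_h h Q p)"
  unfolding symmetric_mat_iff alpha_h_def by (simp add: add.commute eq_commute)

lemma trace_alpha_h: "trace (alpha_h h Q p) = 0"
  unfolding alpha_h_def trace_def by (simp add: sum.distrib sum_subtractf sum_distrib_left)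

theorem proposition4p4:
  fixes a b c L1 L2 L3 M dt A0 :: real
    and N :: nat
    and Qn Qnm1 Qnp1 :: "gridpt \<Rightarrow> mat3"
    and rn rnp1 :: "gridpt \<Rightarrow> real"
  assumes "0 < c" "0 < L1" "0 < L2" "0 < L3" "0 < M" "0 < dt" "0 < A0"
    and "(INF Q\<in>{Q. symmetric_mat Q}. bulk a b c A0 Q) > 0"
    and "bc N Qn" "bc N Qnm1"
    and "\<And>p. symmetric_mat (Qn p) \<and> trace (Qn p) = 0"
    and "\<And>p. symmetric_mat (Qnm1 p) \<and> trace (Qnm1 p) = 0"
    and "bc N Qnp1"
    and "\<And>p. grid_interior N p \<Longrightarrow>
      (1 / dt) *\<^sub>R (Qnp1 p - Qn p) =
        M *\<^sub>R (L1 *\<^sub>R lap_h (hstep N) (\<lambda>q. (1/2) *\<^sub>R (Qnp1 q + Qn q)) p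
          - ((rnp1 p + rn p) / 2) *\<^sub>R
              ((3/2) *\<^sub>R Pfun a b c A0 (Qn p) - (1/2) *\<^sub>R Pfun a b c A0 (Qnm1 p))
          + ((L2 + L3) / 2) *\<^sub>R
              ((1/2) *\<^sub>R (alpha_h (hstep N) Qnp1 p + alpha_h (hstep N) Qn p)))"
    and "\<And>p. grid_interior N p \<Longrightarrow>
      rnp1 p - rn p =
        frob ((3/2) *\<^sub>R Pfun a b c A0 (Qn p) - (1/2) *\<^sub>R Pfun a b c A0 (Qnm1 p))
             (Qnp1 p - Qn p)"
  shows "\<forall>p. symmetric_mat (Qnp1 p) \<and> trace (Qnp1 p) = 0"
proof -
  define F where "F p = - ((rnp1 p + rn p) / 2) *\<^sub>R
      ((3/2) *\<^sub>R Pfun a b c A0 (Qn p) - (1/2) *\<^sub>R Pfun a b c A0 (Qnm1 p))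
    + ((L2 + L3) / 2) *\<^sub>R ((1/2) *\<^sub>R (alpha_h (hstep N) Qnp1 p + alpha_h (hstep N) Qn p))"
    for p
  have step: "(1/dt) *\<^sub>R (Qnp1 p - Qn p) =
      M *\<^sub>R (L1 *\<^sub>R lap_h (hstep N) (\<lambda>q. (1/2) *\<^sub>R (Qnp1 q + Qn q)) p + F p)"
    if "grid_interior N p" for p
    using assms(14)[OF that] by (simp add: F_def)
  have preserved: "l (Qnp1 p) = 0"
    if l: "linear l" and kernel: "\<And>Q. symmetric_mat Q \<Longrightarrow> trace Q = 0 \<Longrightarrow> l Q = 0"
    for l :: "mat3 \<Rightarrow> real" and p
  proof (rule linear_constraint_preserved[OF l _ _ assms(13,5,2,6) step])
    have "l (Pfun a b c A0 Q) = 0" if "symmetric_mat Q" "trace Q = 0" for Q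
      using that by (simp add: kernel symmetric_mat_Pfun trace_Pfun)
    moreover have "l (alpha_h (hstep N) Q q) = 0" for Q q
      by (simp add: kernel symmetric_mat_alpha_h trace_alpha_h)
    ultimately show "l (F q) = 0" for q
      using assms(11,12) by (simp add: F_def linear_add[OF l] linear_diff[OF l] linear_scale[OF l])
    show "l (Qn q) = 0" for q
      using assms(11) by (simp add: kernel)
  qed
  show ?thesis
    using preserved[OF linear_symmetry_defect] preserved[OF linear_trace]
    by (auto simp: symmetric_mat_iff)
qed

end
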